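(* Let $\mathbb{K}$ be a field and $\Delta$ a simplicial complex on vertex set $[n]$ of dimension $d>0$ such that $f_{d-1}\ge f_d$ and $\tilde H_d(\Delta;\mathbb{K})\neq0$. Let $J=I_\Delta+(x_1^{d+2},\dots,x_n^{d+2})\subset R=\mathbb{K}[x_1,\dots,x_n]$. Then $R/J$ fails the weak Lefschetz property.
   Context: $f_i$ is the number of $i$-dimensional faces of $\Delta$; $I_\Delta=(\prod_{i\in\tau}x_i:\tau\notin\Delta)$ is the Stanley–Reisner ideal. An artinian graded algebra $A$ with top nonzero degree $D$ has the weak Lefschetz property (WLP) if there is a linear form $\ell$ such that multiplication $\times\ell:A_i\to A_{i+1}$ has full rank (injective or surjective) for every $i<D$. *)

theory Defs
  imports Main "HOL-Library.Poly_Mapping"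
begin

definition simplicial_complex :: "nat \<Rightarrow> nat set set \<Rightarrow> bool" where
  "simplicial_complex n \<Delta> \<longleftrightarrow>
     \<Delta> \<noteq> {} \<and> (\<forall>F\<in>\<Delta>. F \<subseteq> {1..n}) \<and>
     (\<forall>F\<in>\<Delta>. \<forall>G. G \<subseteq> F \<longrightarrow> G \<in> \<Delta>) \<and>
     (\<forall>i\<in>{1..n}. {i} \<in> \<Delta>)"

definition sc_dim :: "nat set set \<Rightarrow> nat" where
  "sc_dim \<Delta> = Max (card ` \<Delta>) - 1"

definition fvec :: "nat set set \<Rightarrow> nat \<Rightarrow> nat" where
  "fvec \<Delta> i = card {F\<in>\<Delta>. card F = i + 1}"

text \<open>Including the empty face (dimension -1)
  in the chain complex (via k-chains with k+1 = 0 being never used, and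
  (k-1)-faces of cardinality k with k = 0 being the empty face) gives
  the augmented complex, hence reduced homology.\<close>
definition is_chain :: "nat set set \<Rightarrow> nat \<Rightarrow> (nat set \<Rightarrow> 'k::field) \<Rightarrow> bool" where
  "is_chain \<Delta> k c \<longleftrightarrow> (\<forall>F. c F \<noteq> 0 \<longrightarrow> F \<in> \<Delta> \<and> card F = k + 1)"

text \<open>Boundary of a k-chain, a (k-1)-chain (cardinality-k faces): for an oriented
  simplex [v_0 < ... < v_k], the boundary is sum_j (-1)^j [.. omit v_j ..].\<close>
definition boundary :: "nat set set \<Rightarrow> nat \<Rightarrow> (nat set \<Rightarrow> 'k::field) \<Rightarrow> (nat set \<Rightarrow> 'k)" where
  "boundary \<Delta> k c = (\<lambda>G. if G \<in> \<Delta> \<and> card G = k then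
      (\<Sum>v\<in>\<Union>\<Delta> - G. if insert v G \<in> \<Delta>
          then (-1) ^ card {u\<in>G. u < v} * c (insert v G) else 0)
      else 0)"

definition reduced_homology_nonzero :: "'k::field itself \<Rightarrow> nat set set \<Rightarrow> nat \<Rightarrow> bool" where
  "reduced_homology_nonzero _ \<Delta> k \<longleftrightarrow>
     (\<exists>z :: nat set \<Rightarrow> 'k. is_chain \<Delta> k z \<and> boundary \<Delta> k z = (\<lambda>_. 0) \<and>
        \<not> (\<exists>b :: nat set \<Rightarrow> 'k. is_chain \<Delta> (k + 1) b \<and> boundary \<Delta> (k + 1) b = z))"

type_synonym 'k mpoly = "(nat \<Rightarrow>\<^sub>0 nat) \<Rightarrow>\<^sub>0 'k"

definition Var :: "nat \<Rightarrow> 'k::comm_ring_1 mpoly" where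
  "Var i = Poly_Mapping.single (Poly_Mapping.single i 1) 1"

definition mon_deg :: "(nat \<Rightarrow>\<^sub>0 nat) \<Rightarrow> nat" where
  "mon_deg m = (\<Sum>i\<in>Poly_Mapping.keys m. Poly_Mapping.lookup m i)"

definition in_R :: "nat \<Rightarrow> 'k::comm_ring_1 mpoly \<Rightarrow> bool" where
  "in_R n p \<longleftrightarrow> (\<forall>m\<in>Poly_Mapping.keys p. Poly_Mapping.keys m \<subseteq> {1..n})"

definition R_deg :: "nat \<Rightarrow> nat \<Rightarrow> 'k::comm_ring_1 mpoly set" where
  "R_deg n i = {p. in_R n p \<and> (\<forall>m\<in>Poly_Mapping.keys p. mon_deg m = i)}"

definition ideal_gen :: "nat \<Rightarrow> 'k::comm_ring_1 mpoly set \<Rightarrow> 'k mpoly set" where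
  "ideal_gen n G = {p. \<exists>S r. finite S \<and> S \<subseteq> G \<and> (\<forall>g\<in>S. in_R n (r g)) \<and>
                          p = (\<Sum>g\<in>S. r g * g)}"

definition SR_gens :: "nat \<Rightarrow> nat set set \<Rightarrow> 'k::comm_ring_1 mpoly set" where
  "SR_gens n \<Delta> = {(\<Prod>i\<in>\<tau>. Var i) | \<tau>. \<tau> \<subseteq> {1..n} \<and> \<tau> \<notin> \<Delta>}"

definition SR_ideal :: "nat \<Rightarrow> nat set set \<Rightarrow> 'k::comm_ring_1 mpoly set" where
  "SR_ideal n \<Delta> = ideal_gen n (SR_gens n \<Delta>)"

definition quot_nonzero_deg :: "nat \<Rightarrow> 'k::comm_ring_1 mpoly set \<Rightarrow> nat \<Rightarrow> bool" where
  "quot_nonzero_deg n J i \<longleftrightarrow> (\<exists>f\<in>R_deg n i. f \<notin> J)"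

definition top_degree :: "nat \<Rightarrow> 'k::comm_ring_1 mpoly set \<Rightarrow> nat" where
  "top_degree n J = (GREATEST i. quot_nonzero_deg n J i)"

definition mult_injective :: "nat \<Rightarrow> 'k::comm_ring_1 mpoly set \<Rightarrow> 'k mpoly \<Rightarrow> nat \<Rightarrow> bool" where
  "mult_injective n J l i \<longleftrightarrow> (\<forall>f\<in>R_deg n i. l * f \<in> J \<longrightarrow> f \<in> J)"

definition mult_surjective :: "nat \<Rightarrow> 'k::comm_ring_1 mpoly set \<Rightarrow> 'k mpoly \<Rightarrow> nat \<Rightarrow> bool" where
  "mult_surjective n J l i \<longleftrightarrow> (\<forall>g\<in>R_deg n (i + 1). \<exists>f\<in>R_deg n i. g - l * f \<in> J)"

definition has_WLP :: "nat \<Rightarrow> 'k::comm_ring_1 mpoly set \<Rightarrow> bool" where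
  "has_WLP n J \<longleftrightarrow> (\<exists>l\<in>R_deg n 1. \<forall>i < top_degree n J.
       mult_injective n J l i \<or> mult_surjective n J l i)"

end

theory Submission
  imports Defs "Jordan_Normal_Form.Determinant"
begin

text \<open>The standard monomials of \<open>J\<close> (support a face, all exponents at most \<open>d + 1\<close>) form a
  basis of \<open>A = R/J\<close>. Put \<open>T = (d + 1)(d + 2)/2\<close>. A nonzero \<open>d\<close>-cycle \<open>z\<close> gives a functional
  on \<open>A\<^sub>T\<close>: a monomial whose exponents on a \<open>d\<close>-face \<open>F\<close> are a permutation of \<open>1, \<dots>, d + 1\<close> is
  sent to \<open>z F\<close> times the sign of that permutation, everything else to \<open>0\<close>. Because \<open>z\<close> is a
  cycle the functional kills \<open>(x\<^sub>1 + \<dots> + x\<^sub>n) A\<^sub>T\<^sub>-\<^sub>1\<close>, and after rescaling the variables it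
  kills \<open>l A\<^sub>T\<^sub>-\<^sub>1\<close> for any linear form \<open>l\<close>; so \<open>\<times>l : A\<^sub>T\<^sub>-\<^sub>1 \<rightarrow> A\<^sub>T\<close> is not surjective.
  Counting standard monomials shows \<open>dim A\<^sub>T \<le> dim A\<^sub>T\<^sub>-\<^sub>1\<close> once \<open>f\<^sub>d\<^sub>-\<^sub>1 \<ge> f\<^sub>d\<close>, so the map is not
  injective either.\<close>

abbreviation lookup :: "('a \<Rightarrow>\<^sub>0 'b::zero) \<Rightarrow> 'a \<Rightarrow> 'b" where
  "lookup \<equiv> Poly_Mapping.lookup"

abbreviation keys :: "('a \<Rightarrow>\<^sub>0 'b::zero) \<Rightarrow> 'a set" where
  "keys \<equiv> Poly_Mapping.keys"

abbreviation single :: "'a \<Rightarrow> 'b::zero \<Rightarrow> 'a \<Rightarrow>\<^sub>0 'b" where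
  "single \<equiv> Poly_Mapping.single"

lemma keys_add_nat: "keys (a + b :: 'a \<Rightarrow>\<^sub>0 nat) = keys a \<union> keys b"
  by (auto simp: in_keys_iff lookup_add)

lemma poly_mapping_sum_single: "p = (\<Sum>k\<in>keys p. single k (lookup p k))"
  by (rule poly_mapping_eqI) (auto simp: lookup_sum lookup_single when_def in_keys_iff
      intro: sum.neutral elim: sum.mono_neutral_left[THEN sym, rotated 2]
      simp flip: sum.delta[where S = "keys p"])

lemma in_R_add: "in_R n p \<Longrightarrow> in_R n q \<Longrightarrow> in_R n (p + q)"
  unfolding in_R_def using keys_add[of p q] by blast

lemma in_R_mult:
  assumes "in_R n p" "in_R n q" shows "in_R n (p * q)"
  unfolding in_R_def
proof
  fix m assume "m \<in> keys (p * q)"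
  then obtain x y where "m = x + y" "x \<in> keys p" "y \<in> keys q"
    using keys_mult[of p q] by blast
  then show "keys m \<subseteq> {1..n}"
    using assms unfolding in_R_def by (simp add: keys_add_nat)
qed

lemma in_R_single: "keys m \<subseteq> {1..n} \<Longrightarrow> in_R n (single m c)"
  unfolding in_R_def by simp

lemma ideal_gen_zero: "0 \<in> ideal_gen n G"
  unfolding ideal_gen_def by (rule CollectI, rule exI[of _ "{}"]) auto

lemma ideal_gen_add:
  assumes "p \<in> ideal_gen n G" "q \<in> ideal_gen n G" shows "p + q \<in> ideal_gen n G"
proof -
  obtain S1 r1 where S1: "finite S1" "S1 \<subseteq> G" "\<forall>g\<in>S1. in_R n (r1 g)" "p = (\<Sum>g\<in>S1. r1 g * g)"
    using assms(1) unfolding ideal_gen_def by blast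
  obtain S2 r2 where S2: "finite S2" "S2 \<subseteq> G" "\<forall>g\<in>S2. in_R n (r2 g)" "q = (\<Sum>g\<in>S2. r2 g * g)"
    using assms(2) unfolding ideal_gen_def by blast
  define r where "r g = (if g \<in> S1 then r1 g else 0) + (if g \<in> S2 then r2 g else 0)" for g
  have "(\<Sum>g\<in>S1 \<union> S2. r g * g) = (\<Sum>g\<in>S1 \<union> S2. if g \<in> S1 then r1 g * g else 0)
      + (\<Sum>g\<in>S1 \<union> S2. if g \<in> S2 then r2 g * g else 0)"
    unfolding r_def distrib_right sum.distrib[symmetric] by (intro sum.cong) auto
  also have "\<dots> = p + q"
    using S1 S2 by (simp add: sum.If_cases Int_absorb1)
  finally have "p + q = (\<Sum>g\<in>S1 \<union> S2. r g * g)" by simp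
  moreover have "\<forall>g\<in>S1 \<union> S2. in_R n (r g)"
    using S1 S2 unfolding r_def by (auto intro: in_R_add)
  ultimately show ?thesis
    using S1 S2 unfolding ideal_gen_def by (intro CollectI exI[of _ "S1 \<union> S2"] exI[of _ r]) auto
qed

lemma ideal_gen_mult_gen: "g \<in> G \<Longrightarrow> in_R n q \<Longrightarrow> q * g \<in> ideal_gen n G"
  unfolding ideal_gen_def by (intro CollectI exI[of _ "{g}"] exI[of _ "\<lambda>_. q"]) auto

lemma ideal_gen_sum:
  "(\<And>x. x \<in> A \<Longrightarrow> f x \<in> ideal_gen n G) \<Longrightarrow> sum f A \<in> ideal_gen n G"
  by (induction A rule: infinite_finite_induct) (auto intro: ideal_gen_add ideal_gen_zero)

lemma keys_ideal_gen:
  assumes gens: "\<And>g k. g \<in> G \<Longrightarrow> k \<in> keys g \<Longrightarrow> P k"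
    and up: "\<And>a k. P k \<Longrightarrow> P (a + k)"
    and p: "p \<in> ideal_gen n G" and k: "k \<in> keys p"
  shows "P k"
proof -
  obtain S r where S: "S \<subseteq> G" "p = (\<Sum>g\<in>S. r g * g)"
    using p unfolding ideal_gen_def by blast
  then obtain g where g: "g \<in> S" "k \<in> keys (r g * g)"
    using k keys_sum[of "\<lambda>g. r g * g" S] by blast
  then obtain a b where "k = a + b" "b \<in> keys g"
    using keys_mult[of "r g" g] by blast
  then show ?thesis using gens up g(1) S(1) by blast
qed

lemma mon_deg_eq_sum: "finite A \<Longrightarrow> keys m \<subseteq> A \<Longrightarrow> mon_deg m = (\<Sum>i\<in>A. lookup m i)"
  unfolding mon_deg_def by (rule sum.mono_neutral_left) (auto simp: in_keys_iff)

lemma mon_deg_add: "mon_deg (a + b) = mon_deg a + mon_deg b"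
proof -
  have "finite (keys a \<union> keys b)" by simp
  from mon_deg_eq_sum[OF this] show ?thesis
    by (simp add: keys_add_nat lookup_add sum.distrib)
qed

lemma mon_deg_single [simp]: "mon_deg (single i j) = j"
  unfolding mon_deg_def by simp

definition var_exp :: "nat \<Rightarrow> (nat \<Rightarrow>\<^sub>0 nat)" where
  "var_exp v = single v 1"

lemma lookup_var_exp: "lookup (var_exp v) i = (if i = v then 1 else 0)"
  unfolding var_exp_def by (simp add: lookup_single when_def)

lemma keys_var_exp [simp]: "keys (var_exp v) = {v}"
  unfolding var_exp_def by simp

lemma var_exp_inject [simp]: "var_exp v = var_exp w \<longleftrightarrow> v = w"
  unfolding var_exp_def by (metis lookup_single_eq lookup_single_not_eq zero_neq_one)

lemma lookup_add_var_exp: "lookup (b + var_exp v) i = lookup b i + (if i = v then 1 else 0)"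
  by (simp add: lookup_add lookup_var_exp)

lemma keys_add_var_exp: "keys (b + var_exp v) = insert v (keys b)"
  by (simp add: keys_add_nat)

lemma mon_deg_eq_1_imp_var_exp:
  assumes "mon_deg k = 1" obtains v where "k = var_exp v"
proof -
  have sum1: "(\<Sum>i\<in>keys k. lookup k i) = 1" using assms unfolding mon_deg_def .
  then obtain v where v: "v \<in> keys k" by fastforce
  have "lookup k v \<ge> 1" using v by (simp add: in_keys_iff Suc_leI)
  moreover have "lookup k v + (\<Sum>i\<in>keys k - {v}. lookup k i) = 1"
    using sum1 sum.remove[OF _ v, of "lookup k"] by simp
  ultimately have v1: "lookup k v = 1" and rest: "(\<Sum>i\<in>keys k - {v}. lookup k i) = 0"
    by linarith+
  have "lookup k i = lookup (var_exp v) i" for i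
    using rest by (cases "i = v") (auto simp: lookup_var_exp v1 in_keys_iff)
  then show ?thesis using that poly_mapping_eqI by blast
qed

lemma linear_form_eq_sum:
  assumes "(l :: 'k::comm_ring_1 mpoly) \<in> R_deg n 1"
  shows "l = (\<Sum>v\<in>{1..n}. single (var_exp v) (lookup l (var_exp v)))"
proof (rule poly_mapping_eqI)
  fix k
  have "lookup (\<Sum>v\<in>{1..n}. single (var_exp v) (lookup l (var_exp v))) k
      = (\<Sum>v\<in>{1..n}. if var_exp v = k then lookup l k else 0)"
    by (auto simp: lookup_sum lookup_single when_def intro: sum.cong)
  also have "\<dots> = lookup l k"
  proof (cases "\<exists>w\<in>{1..n}. var_exp w = k")
    case True
    then obtain w where "w \<in> {1..n}" "k = var_exp w" by auto
    then show ?thesis by simp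
  next
    case False
    have "k \<notin> keys l"
    proof
      assume k: "k \<in> keys l"
      then have "keys k \<subseteq> {1..n}" "mon_deg k = 1"
        using assms unfolding R_deg_def in_R_def by auto
      obtain v where "k = var_exp v" using \<open>mon_deg k = 1\<close> by (rule mon_deg_eq_1_imp_var_exp)
      then show False using False \<open>keys k \<subseteq> {1..n}\<close> by auto
    qed
    then show ?thesis using False by (simp add: in_keys_iff)
  qed
  finally show "lookup l k = lookup (\<Sum>v\<in>{1..n}. single (var_exp v) (lookup l (var_exp v))) k"
    by simp
qed

lemma prod_Var_eq_single:
  "finite \<tau> \<Longrightarrow> (\<Prod>i\<in>\<tau>. Var i) = (single (\<Sum>i\<in>\<tau>. var_exp i) 1 :: 'k::comm_ring_1 mpoly)"
  by (induction \<tau> rule: finite_induct) (simp_all add: Var_def var_exp_def mult_single)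

lemma Var_power_eq_single: "(Var i ^ k :: 'k::comm_ring_1 mpoly) = single (single i k) 1"
  by (induction k) (auto simp: Var_def mult_single single_add[symmetric] add.commute)

lemma lookup_sum_var_exp:
  "finite \<tau> \<Longrightarrow> lookup (\<Sum>i\<in>\<tau>. var_exp i) j = (if j \<in> \<tau> then 1 else 0)"
  by (simp add: lookup_sum lookup_var_exp)

lemma keys_sum_var_exp: "finite \<tau> \<Longrightarrow> keys (\<Sum>i\<in>\<tau>. var_exp i) = \<tau>"
  by (auto simp: in_keys_iff lookup_sum_var_exp split: if_splits)

lemma simplicial_complex_subset:
  "simplicial_complex n \<Delta> \<Longrightarrow> F \<in> \<Delta> \<Longrightarrow> G \<subseteq> F \<Longrightarrow> G \<in> \<Delta>"
  unfolding simplicial_complex_def by blast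

lemma simplicial_complex_face_subset:
  "simplicial_complex n \<Delta> \<Longrightarrow> F \<in> \<Delta> \<Longrightarrow> F \<subseteq> {1..n}"
  unfolding simplicial_complex_def by auto

lemma simplicial_complex_finite_face:
  "simplicial_complex n \<Delta> \<Longrightarrow> F \<in> \<Delta> \<Longrightarrow> finite F"
  by (meson finite_atLeastAtMost finite_subset simplicial_complex_face_subset)

lemma simplicial_complex_finite:
  assumes "simplicial_complex n \<Delta>" shows "finite \<Delta>"
proof (rule finite_subset)
  show "\<Delta> \<subseteq> Pow {1..n}" using simplicial_complex_face_subset[OF assms] by blast
qed simp

lemma Union_simplicial_complex:
  assumes "simplicial_complex n \<Delta>" shows "\<Union>\<Delta> = {1..n}"
proof
  show "\<Union>\<Delta> \<subseteq> {1..n}" using simplicial_complex_face_subset[OF assms] by blast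
  show "{1..n} \<subseteq> \<Union>\<Delta>" using assms unfolding simplicial_complex_def by (metis UnionI singletonI subsetI)
qed

lemma card_face_le:
  assumes "simplicial_complex n \<Delta>" "d = sc_dim \<Delta>" "d > 0" "F \<in> \<Delta>"
  shows "card F \<le> d + 1"
  using assms Max_ge[of "card ` \<Delta>" "card F"] simplicial_complex_finite[OF assms(1)]
  unfolding sc_dim_def by simp

section \<open>Standard monomials of \<open>J\<close>\<close>

definition J_gens :: "nat \<Rightarrow> nat set set \<Rightarrow> nat \<Rightarrow> 'k::comm_ring_1 mpoly set" where
  "J_gens n \<Delta> d = SR_gens n \<Delta> \<union> {Var i ^ (d + 2) | i. i \<in> {1..n}}"

definition standard :: "nat set set \<Rightarrow> nat \<Rightarrow> (nat \<Rightarrow>\<^sub>0 nat) \<Rightarrow> bool" where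
  "standard \<Delta> d m \<longleftrightarrow> keys m \<in> \<Delta> \<and> (\<forall>i. lookup m i \<le> d + 1)"

lemma standard_keys_subset: "simplicial_complex n \<Delta> \<Longrightarrow> standard \<Delta> d m \<Longrightarrow> keys m \<subseteq> {1..n}"
  unfolding standard_def using simplicial_complex_face_subset by blast

lemma not_standard_add:
  assumes "simplicial_complex n \<Delta>" "\<not> standard \<Delta> d k" shows "\<not> standard \<Delta> d (a + k)"
proof
  assume std: "standard \<Delta> d (a + k)"
  have "keys k \<subseteq> keys (a + k)" by (simp add: keys_add_nat)
  then have "keys k \<in> \<Delta>"
    using std simplicial_complex_subset[OF assms(1)] unfolding standard_def by blast
  moreover have "lookup k i \<le> d + 1" for i
    using std unfolding standard_def by (metis le_add2 lookup_add order_trans)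
  ultimately show False using assms(2) unfolding standard_def by blast
qed

lemma keys_J_not_standard:
  assumes sc: "simplicial_complex n \<Delta>" and p: "(p :: 'k::comm_ring_1 mpoly) \<in> ideal_gen n (J_gens n \<Delta> d)"
    and k: "k \<in> keys p"
  shows "\<not> standard \<Delta> d k"
proof (rule keys_ideal_gen[where P = "\<lambda>k. \<not> standard \<Delta> d k", OF _ not_standard_add[OF sc] p k])
  fix g :: "'k mpoly" and k assume g: "g \<in> J_gens n \<Delta> d" and k: "k \<in> keys g"
  show "\<not> standard \<Delta> d k"
  proof (cases "g \<in> SR_gens n \<Delta>")
    case True
    then obtain \<tau> where \<tau>: "\<tau> \<subseteq> {1..n}" "\<tau> \<notin> \<Delta>" "g = (\<Prod>i\<in>\<tau>. Var i)"
      unfolding SR_gens_def by blast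
    then have "finite \<tau>" by (meson finite_atLeastAtMost finite_subset)
    then have "k = (\<Sum>i\<in>\<tau>. var_exp i)" "keys k = \<tau>"
      using k \<tau>(3) by (simp_all add: prod_Var_eq_single keys_sum_var_exp split: if_splits)
    then show ?thesis using \<tau>(2) unfolding standard_def by simp
  next
    case False
    then obtain i where "g = Var i ^ (d + 2)" using g unfolding J_gens_def by blast
    then have "g = single (single i (d + 2)) 1" by (simp only: Var_power_eq_single)
    then have "lookup k i = d + 2" using k by (simp split: if_splits)
    then have "\<not> lookup k i \<le> d + 1" by simp
    then show ?thesis unfolding standard_def by blast
  qed
qed

lemma single_not_standard_in_J:
  assumes sc: "simplicial_complex n \<Delta>" and m: "keys m \<subseteq> {1..n}" "\<not> standard \<Delta> d m"
  shows "(single m c :: 'k::comm_ring_1 mpoly) \<in> ideal_gen n (J_gens n \<Delta> d)"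
proof -
  obtain \<mu> where \<mu>: "(single \<mu> 1 :: 'k mpoly) \<in> J_gens n \<Delta> d" "\<forall>i. lookup \<mu> i \<le> lookup m i"
  proof (cases "keys m \<in> \<Delta>")
    case False
    let ?\<mu> = "\<Sum>i\<in>keys m. var_exp i"
    have "(single ?\<mu> 1 :: 'k mpoly) = (\<Prod>i\<in>keys m. Var i)"
      by (simp add: prod_Var_eq_single)
    then have "(single ?\<mu> 1 :: 'k mpoly) \<in> SR_gens n \<Delta>"
      unfolding SR_gens_def using False m(1) by blast
    moreover have "lookup ?\<mu> i \<le> lookup m i" for i
      by (simp add: lookup_sum_var_exp in_keys_iff Suc_leI)
    ultimately show ?thesis using that unfolding J_gens_def by blast
  next
    case True
    then obtain i where i: "lookup m i > d + 1" using m(2) unfolding standard_def by (meson not_le)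
    then have "i \<in> {1..n}" using m(1) by (simp add: in_keys_iff subset_iff)
    then have "(single (single i (d + 2)) 1 :: 'k mpoly) \<in> J_gens n \<Delta> d"
      unfolding J_gens_def Var_power_eq_single[symmetric] by blast
    moreover have "lookup (single i (d + 2)) j \<le> lookup m j" for j
      using i by (auto simp: lookup_single when_def)
    ultimately show ?thesis using that by blast
  qed
  have m_eq: "(m - \<mu>) + \<mu> = m"
    by (rule poly_mapping_eqI) (simp add: lookup_add lookup_minus \<mu>(2))
  have "keys (m - \<mu>) \<subseteq> keys m" by (auto simp: in_keys_iff lookup_minus)
  then have "in_R n (single (m - \<mu>) c :: 'k mpoly)" using m(1) by (intro in_R_single) blast
  then have "single (m - \<mu>) c * single \<mu> 1 \<in> ideal_gen n (J_gens n \<Delta> d)"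
    by (rule ideal_gen_mult_gen[OF \<mu>(1)])
  moreover have "single (m - \<mu>) c * single \<mu> 1 = (single m c :: 'k mpoly)"
    by (simp add: mult_single m_eq)
  ultimately show ?thesis by simp
qed

lemma not_standard_in_J:
  assumes "simplicial_complex n \<Delta>" "in_R n (p :: 'k::comm_ring_1 mpoly)"
    "\<And>k. k \<in> keys p \<Longrightarrow> \<not> standard \<Delta> d k"
  shows "p \<in> ideal_gen n (J_gens n \<Delta> d)"
proof -
  have "single k (lookup p k) \<in> ideal_gen n (J_gens n \<Delta> d)" if "k \<in> keys p" for k
    using assms that unfolding in_R_def by (intro single_not_standard_in_J) auto
  then have "(\<Sum>k\<in>keys p. single k (lookup p k)) \<in> ideal_gen n (J_gens n \<Delta> d)"
    by (rule ideal_gen_sum)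
  then show ?thesis unfolding poly_mapping_sum_single[of p, symmetric] .
qed

section \<open>Counting standard monomials\<close>

fun n_compositions :: "nat \<Rightarrow> nat \<Rightarrow> int \<Rightarrow> nat" where
  "n_compositions d 0 x = (if x = 0 then 1 else 0)"
| "n_compositions d (Suc s) x = (\<Sum>j\<in>{1..d+1}. n_compositions d s (x - int j))"

lemma n_compositions_neg: "x < 0 \<Longrightarrow> n_compositions d s x = 0"
  by (induction s arbitrary: x) auto

lemma n_compositions_symmetric:
  "n_compositions d s x = n_compositions d s (int s * (int d + 2) - x)"
proof (induction s arbitrary: x)
  case 0
  then show ?case by simp
next
  case (Suc s)
  have "n_compositions d (Suc s) (int (Suc s) * (int d + 2) - x)
      = (\<Sum>j\<in>{1..d+1}. n_compositions d s (int (Suc s) * (int d + 2) - x - int j))"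
    by simp
  also have "\<dots> = (\<Sum>j\<in>{1..d+1}. n_compositions d s (x - int (d + 2 - j)))"
  proof (rule sum.cong[OF refl])
    fix j assume "j \<in> {1..d+1}"
    then have e: "int s * (int d + 2) - (x - int (d + 2 - j)) = int (Suc s) * (int d + 2) - x - int j"
      by (simp add: algebra_simps)
    show "n_compositions d s (int (Suc s) * (int d + 2) - x - int j)
        = n_compositions d s (x - int (d + 2 - j))"
      using Suc.IH[of "x - int (d + 2 - j)"] unfolding e by simp
  qed
  also have "\<dots> = (\<Sum>j\<in>{1..d+1}. n_compositions d s (x - int j))"
    by (rule sum.reindex_bij_witness[where i = "\<lambda>j. d + 2 - j" and j = "\<lambda>j. d + 2 - j"]) auto
  finally show ?case by simp
qed

lemma n_compositions_Suc_diff: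
  "int (n_compositions d (Suc s) (x + 1)) - int (n_compositions d (Suc s) x)
     = int (n_compositions d s x) - int (n_compositions d s (x - int d - 1))"
proof -
  have lo: "{1..d+1} = insert 1 {2..d+1}" and hi: "{1..d+1} = insert (d+1) {1..d}" by auto
  have "n_compositions d (Suc s) (x + 1)
      = n_compositions d s x + (\<Sum>j\<in>{2..d+1}. n_compositions d s (x + 1 - int j))"
    by (simp only: n_compositions.simps lo, simp)
  moreover have "n_compositions d (Suc s) x
      = n_compositions d s (x - int d - 1) + (\<Sum>j\<in>{1..d}. n_compositions d s (x - int j))"
    by (simp only: n_compositions.simps hi, simp add: algebra_simps)
  moreover have "(\<Sum>j\<in>{2..d+1}. n_compositions d s (x + 1 - int j))
      = (\<Sum>j\<in>{1..d}. n_compositions d s (x - int j))"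
    by (rule sum.reindex_bij_witness[where i = "\<lambda>j. j + 1" and j = "\<lambda>j. j - 1"])
      (auto simp: of_nat_diff algebra_simps)
  ultimately show ?thesis by simp
qed

lemma int_antimono_from_steps:
  fixes f :: "int \<Rightarrow> 'a::order"
  assumes dec: "\<And>x. a \<le> x \<Longrightarrow> f (x + 1) \<le> f x" and "a \<le> x" "x \<le> y"
  shows "f y \<le> f x"
proof -
  have "f (x + int k) \<le> f x" for k
  proof (induction k)
    case 0
    then show ?case by simp
  next
    case (Suc k)
    have "x + int (Suc k) = (x + int k) + 1" by simp
    moreover have "f ((x + int k) + 1) \<le> f (x + int k)" using dec \<open>a \<le> x\<close> by simp
    ultimately show ?case using Suc.IH by (metis order_trans)
  qed
  from this[of "nat (y - x)"] show ?thesis using \<open>x \<le> y\<close> by simp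
qed

text \<open>The sequence is symmetric about \<open>s (d + 2) / 2\<close>; by induction on \<open>s\<close>, the
  difference formula above reduces its decrease beyond the middle to the step for \<open>s\<close>, after
  reflecting \<open>x - d - 1\<close> to the upper half when it falls below the middle.\<close>
lemma n_compositions_antimono:
  "int s * (int d + 2) \<le> 2 * x \<Longrightarrow> x \<le> y \<Longrightarrow> n_compositions d s y \<le> n_compositions d s x"
proof (induction s arbitrary: x y)
  case 0
  then show ?case by auto
next
  case (Suc s)
  have "n_compositions d (Suc s) (x' + 1) \<le> n_compositions d (Suc s) x'" if "x \<le> x'" for x'
  proof -
    have "n_compositions d s x' \<le> n_compositions d s (x' - int d - 1)"
    proof (cases "int s * (int d + 2) \<le> 2 * (x' - int d - 1)")
      case True
      then show ?thesis by (rule Suc.IH) simp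
    next
      case False
      define u where "u = int s * (int d + 2) - (x' - int d - 1)"
      have "n_compositions d s x' \<le> n_compositions d s u"
        by (rule Suc.IH) (use False Suc.prems(1) that in \<open>auto simp: u_def algebra_simps\<close>)
      then show ?thesis unfolding u_def by (metis n_compositions_symmetric)
    qed
    then show ?thesis using n_compositions_Suc_diff[of d s x'] by linarith
  qed
  then show ?case using int_antimono_from_steps Suc.prems(2) by blast
qed

lemma n_compositions_middle:
  assumes "2 * T = (int d + 1) * (int d + 2)"
  shows "int (n_compositions d (Suc d) (T - 1)) - int (n_compositions d (Suc d) T)
    = int (n_compositions d d T) - int (n_compositions d d (T - 1))"
proof -
  have "n_compositions d d T = n_compositions d d (int d * (int d + 2) - T)"
    by (rule n_compositions_symmetric)
  also have "int d * (int d + 2) - T = T - 1 - int d - 1"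
    using assms by (simp add: algebra_simps)
  finally show ?thesis using n_compositions_Suc_diff[of d d "T - 1"] by simp
qed

definition capped_monomials :: "nat \<Rightarrow> nat set \<Rightarrow> nat \<Rightarrow> (nat \<Rightarrow>\<^sub>0 nat) set" where
  "capped_monomials d G x = {m. keys m = G \<and> (\<forall>i. lookup m i \<le> d + 1) \<and> mon_deg m = x}"

lemma capped_monomials_empty: "capped_monomials d {} x = (if x = 0 then {0} else {})"
  unfolding capped_monomials_def mon_deg_def by auto

lemma capped_monomials_insert:
  assumes "g \<notin> G"
  shows "capped_monomials d (insert g G) x
    = (\<Union>j\<in>{j\<in>{1..d+1}. j \<le> x}. (\<lambda>m. m + single g j) ` capped_monomials d G (x - j))"
proof (intro equalityI subsetI)
  fix m assume "m \<in> capped_monomials d (insert g G) x"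
  then have m: "keys m = insert g G" "\<forall>i. lookup m i \<le> d + 1" "mon_deg m = x"
    unfolding capped_monomials_def by auto
  define j where "j = lookup m g"
  have "g \<in> keys m" using m(1) by simp
  then have j: "1 \<le> j" "j \<le> d + 1"
    using m(2) unfolding j_def by (auto simp: in_keys_iff Suc_leI)
  define m' where "m' = m - single g j"
  have lookup_m': "lookup m' i = (if i = g then 0 else lookup m i)" for i
    unfolding m'_def j_def by (simp add: lookup_minus lookup_single when_def)
  have m_eq: "m = m' + single g j"
    by (rule poly_mapping_eqI) (simp add: lookup_add lookup_m' lookup_single when_def j_def)
  have "keys m' = G"
    using m(1) assms by (auto simp: in_keys_iff lookup_m' split: if_splits)
  moreover have "mon_deg m = mon_deg m' + j"
    using mon_deg_add[of m' "single g j"] m_eq by simp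
  ultimately have "m' \<in> capped_monomials d G (x - j)" "j \<le> x"
    using m unfolding capped_monomials_def by (auto simp: lookup_m')
  then show "m \<in> (\<Union>j\<in>{j\<in>{1..d+1}. j \<le> x}. (\<lambda>m. m + single g j) ` capped_monomials d G (x - j))"
    using m_eq j by auto
next
  fix m assume "m \<in> (\<Union>j\<in>{j\<in>{1..d+1}. j \<le> x}. (\<lambda>m. m + single g j) ` capped_monomials d G (x - j))"
  then obtain j m' where j: "1 \<le> j" "j \<le> d + 1" "j \<le> x"
    and m': "keys m' = G" "\<forall>i. lookup m' i \<le> d + 1" "mon_deg m' = x - j"
    and m_eq: "m = m' + single g j"
    unfolding capped_monomials_def by auto
  have "lookup m' g = 0" using m'(1) assms by (metis in_keys_iff)
  then show "m \<in> capped_monomials d (insert g G) x"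
    unfolding capped_monomials_def using m_eq m' j mon_deg_add[of m' "single g j"]
    by (auto simp: keys_add_nat lookup_add lookup_single when_def)
qed

lemma finite_capped_monomials: "finite G \<Longrightarrow> finite (capped_monomials d G x)"
  by (induction G arbitrary: x rule: finite_induct) (auto simp: capped_monomials_empty capped_monomials_insert)

lemma card_capped_monomials:
  "finite G \<Longrightarrow> card (capped_monomials d G x) = n_compositions d (card G) (int x)"
proof (induction G arbitrary: x rule: finite_induct)
  case empty
  then show ?case by (simp add: capped_monomials_empty)
next
  case (insert g G)
  let ?J = "{j\<in>{1..d+1}. j \<le> x}"
  have inj: "inj_on (\<lambda>m::nat \<Rightarrow>\<^sub>0 nat. m + single g j) A" for j A
    by (rule inj_onI) simp
  have disjoint: "(\<lambda>m. m + single g j) ` capped_monomials d G (x - j)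
      \<inter> (\<lambda>m. m + single g j') ` capped_monomials d G (x - j') = {}" if "j \<noteq> j'" for j j'
  proof -
    have "j = j'" if "m1 \<in> capped_monomials d G (x - j)" "m2 \<in> capped_monomials d G (x - j')"
      "m1 + single g j = m2 + single g j'" for m1 m2
    proof -
      have "lookup m1 g = 0" "lookup m2 g = 0"
        using that(1,2) insert(2) unfolding capped_monomials_def by (auto simp: in_keys_iff)
      then show ?thesis using arg_cong[OF that(3), of "\<lambda>p. lookup p g"] by (simp add: lookup_add)
    qed
    then show ?thesis using \<open>j \<noteq> j'\<close> by blast
  qed
  have "card (capped_monomials d (insert g G) x)
      = (\<Sum>j\<in>?J. card ((\<lambda>m. m + single g j) ` capped_monomials d G (x - j)))"
    unfolding capped_monomials_insert[OF insert(2)]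
    by (rule card_UN_disjoint) (use insert(1) finite_capped_monomials disjoint in auto)
  also have "\<dots> = (\<Sum>j\<in>?J. n_compositions d (card G) (int x - int j))"
    by (rule sum.cong) (auto simp: card_image[OF inj] insert(3))
  also have "\<dots> = (\<Sum>j\<in>{1..d+1}. n_compositions d (card G) (int x - int j))"
    by (rule sum.mono_neutral_left) (auto intro!: n_compositions_neg)
  finally show ?case using insert(1,2) by simp
qed

definition standard_monomials :: "nat set set \<Rightarrow> nat \<Rightarrow> nat \<Rightarrow> (nat \<Rightarrow>\<^sub>0 nat) set" where
  "standard_monomials \<Delta> d x = {m. standard \<Delta> d m \<and> mon_deg m = x}"

lemma standard_monomials_eq_UN: "standard_monomials \<Delta> d x = (\<Union>G\<in>\<Delta>. capped_monomials d G x)"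
  unfolding standard_monomials_def capped_monomials_def standard_def by auto

lemma finite_standard_monomials:
  "simplicial_complex n \<Delta> \<Longrightarrow> finite (standard_monomials \<Delta> d x)"
  unfolding standard_monomials_eq_UN
  by (auto intro!: finite_capped_monomials simp: simplicial_complex_finite simplicial_complex_finite_face)

lemma card_standard_monomials:
  assumes sc: "simplicial_complex n \<Delta>"
  shows "card (standard_monomials \<Delta> d x) = (\<Sum>G\<in>\<Delta>. n_compositions d (card G) (int x))"
proof -
  have "card (\<Union>G\<in>\<Delta>. capped_monomials d G x) = (\<Sum>G\<in>\<Delta>. card (capped_monomials d G x))"
  proof (rule card_UN_disjoint)
    show "finite \<Delta>" by (rule simplicial_complex_finite[OF sc])
    show "\<forall>G\<in>\<Delta>. finite (capped_monomials d G x)"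
      using simplicial_complex_finite_face[OF sc] finite_capped_monomials by blast
    show "\<forall>G\<in>\<Delta>. \<forall>G'\<in>\<Delta>. G \<noteq> G' \<longrightarrow> capped_monomials d G x \<inter> capped_monomials d G' x = {}"
      unfolding capped_monomials_def by auto
  qed
  then show ?thesis
    by (simp add: standard_monomials_eq_UN card_capped_monomials simplicial_complex_finite_face[OF sc])
qed

text \<open>In the middle degree \<open>T\<close> of the top faces, faces with at most \<open>d\<close> vertices contribute at
  least as many standard monomials to degree \<open>T - 1\<close> as to \<open>T\<close>; the surplus \<open>e\<close> of a
  \<open>(d - 1)\<close>-face is exactly the deficit of a \<open>d\<close>-face, so \<open>f\<^sub>d\<^sub>-\<^sub>1 \<ge> f\<^sub>d\<close> settles the balance.\<close>
lemma card_standard_monomials_middle_le: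
  assumes sc: "simplicial_complex n \<Delta>" and dim: "d = sc_dim \<Delta>" "d > 0"
    and f: "fvec \<Delta> (d - 1) \<ge> fvec \<Delta> d" and T: "2 * T = (d + 1) * (d + 2)"
  shows "card (standard_monomials \<Delta> d T) \<le> card (standard_monomials \<Delta> d (T - 1))"
proof -
  have fin: "finite \<Delta>" using simplicial_complex_finite[OF sc] .
  have "T \<ge> 1" using T by (cases T) auto
  define x where "x = int T - 1"
  have Tx: "int (T - 1) = x" "int T = x + 1" using \<open>T \<ge> 1\<close> unfolding x_def by auto
  have x2: "2 * x = int d * (int d + 2) + int d"
    using arg_cong[OF T, of int] unfolding x_def by (simp add: algebra_simps)
  define h where "h c = int (n_compositions d c x) - int (n_compositions d c (x + 1))" for c
  define e where "e = h d"
  have h_nonneg: "h c \<ge> 0" if "c \<le> d" for c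
  proof -
    have "int c * (int d + 2) \<le> int d * (int d + 2)" using that by (intro mult_right_mono) auto
    then have "int c * (int d + 2) \<le> 2 * x" using x2 by linarith
    then show ?thesis unfolding h_def using n_compositions_antimono[of c d x "x + 1"] by simp
  qed
  have h_top: "h (d + 1) = - e"
    using n_compositions_middle[of "x + 1" d] x2 unfolding e_def h_def by (simp add: algebra_simps)
  have sum_if: "(\<Sum>G\<in>\<Delta>. if card G = c then a else 0) = a * int (card {G\<in>\<Delta>. card G = c})"
    for c and a :: int
    using fin by (simp add: sum.inter_filter[symmetric] mult.commute)
  have "0 \<le> e * (int (fvec \<Delta> (d - 1)) - int (fvec \<Delta> d))"
    using f h_nonneg[of d] unfolding e_def by simp
  also have "\<dots> = (\<Sum>G\<in>\<Delta>. if card G = d then e else 0) + (\<Sum>G\<in>\<Delta>. if card G = d + 1 then - e else 0)"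
    using \<open>d > 0\<close> unfolding sum_if fvec_def by (simp add: algebra_simps)
  also have "\<dots> \<le> (\<Sum>G\<in>\<Delta>. h (card G))"
    unfolding sum.distrib[symmetric]
  proof (rule sum_mono)
    fix G assume "G \<in> \<Delta>"
    then have "card G \<le> d + 1" using card_face_le[OF sc dim] by blast
    then show "(if card G = d then e else 0) + (if card G = d + 1 then - e else 0) \<le> h (card G)"
      using h_nonneg h_top unfolding e_def by (auto simp: le_Suc_eq)
  qed
  finally have "0 \<le> (\<Sum>G\<in>\<Delta>. h (card G))" .
  then have "int (\<Sum>G\<in>\<Delta>. n_compositions d (card G) (x + 1))
      \<le> int (\<Sum>G\<in>\<Delta>. n_compositions d (card G) x)"
    unfolding h_def by (simp add: sum_subtractf)
  then show ?thesis unfolding card_standard_monomials[OF sc] Tx by linarith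
qed

section \<open>The functional of a cycle\<close>

definition permutation_exp :: "nat \<Rightarrow> (nat \<Rightarrow>\<^sub>0 nat) \<Rightarrow> bool" where
  "permutation_exp d m \<longleftrightarrow> card (keys m) = d + 1 \<and> lookup m ` keys m = {1..d+1}"

definition inversions :: "(nat \<Rightarrow>\<^sub>0 nat) \<Rightarrow> (nat \<times> nat) set" where
  "inversions m = {(u, w). u \<in> keys m \<and> w \<in> keys m \<and> u < w \<and> lookup m w < lookup m u}"

definition cycle_functional :: "(nat set \<Rightarrow> 'k::field) \<Rightarrow> nat \<Rightarrow> (nat \<Rightarrow>\<^sub>0 nat) \<Rightarrow> 'k" where
  "cycle_functional z d m =
     (if permutation_exp d m then z (keys m) * (-1) ^ card (inversions m) else 0)"

lemma finite_inversions: "finite (inversions m)"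
proof (rule finite_subset)
  show "inversions m \<subseteq> keys m \<times> keys m" unfolding inversions_def by auto
qed simp

lemma permutation_exp_inj_on: "permutation_exp d m \<Longrightarrow> inj_on (lookup m) (keys m)"
  unfolding permutation_exp_def by (simp add: inj_on_iff_eq_card)

lemma permutation_exp_lookup_le: "permutation_exp d m \<Longrightarrow> lookup m v \<le> d + 1"
  unfolding permutation_exp_def by (cases "v \<in> keys m") (auto simp: in_keys_iff)

lemma minus_one_power_card_toggle:
  assumes "finite A" "finite B" "A - {p} = B - {p}" "p \<in> A \<longleftrightarrow> p \<notin> B"
  shows "(-1 :: 'a::ring_1) ^ card A = - ((-1) ^ card B)"
proof (cases "p \<in> A")
  case True
  then have "B = A - {p}" using assms(3,4) by blast
  then have "card A = Suc (card B)" using card_Suc_Diff1[OF assms(1) True] by simp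
  then show ?thesis by simp
next
  case False
  then have "A = B - {p}" "p \<in> B" using assms(3,4) by blast+
  then have "card B = Suc (card A)" using card_Suc_Diff1[OF assms(2)] by simp
  then show ?thesis by simp
qed

text \<open>Exchanging two adjacent exponent values toggles exactly one inversion.\<close>
lemma minus_one_power_inversions_swap:
  assumes keys: "keys m' = keys m" and uv: "u \<in> keys m" "v \<in> keys m"
    and inj: "inj_on (lookup m) (keys m)"
    and adj: "lookup m v = lookup m u + 1"
    and swap: "lookup m' u = lookup m v" "lookup m' v = lookup m u"
    and rest: "\<And>w. w \<in> keys m \<Longrightarrow> w \<noteq> u \<Longrightarrow> w \<noteq> v \<Longrightarrow> lookup m' w = lookup m w"
  shows "(-1 :: 'a::ring_1) ^ card (inversions m') = - ((-1) ^ card (inversions m))"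
proof (rule minus_one_power_card_toggle[OF finite_inversions finite_inversions])
  let ?p = "(min u v, max u v)"
  have "u \<noteq> v" using adj by auto
  have other: "lookup m w \<noteq> lookup m u" "lookup m w \<noteq> lookup m v"
    if "w \<in> keys m" "w \<noteq> u" "w \<noteq> v" for w
    using inj that uv unfolding inj_on_def by metis+
  have same_order: "lookup m' y < lookup m' x \<longleftrightarrow> lookup m y < lookup m x"
    if "x \<in> keys m" "y \<in> keys m" "x < y" "(x, y) \<noteq> ?p" for x y
  proof -
    have "\<not> (x \<in> {u, v} \<and> y \<in> {u, v})" using that by (auto simp: min_def max_def)
    then consider "x \<notin> {u, v}" "y \<notin> {u, v}" | "x \<in> {u, v}" "y \<notin> {u, v}" | "x \<notin> {u, v}" "y \<in> {u, v}"
      by blast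
    then show ?thesis
    proof cases
      case 1
      then show ?thesis using rest that by simp
    next
      case 2
      then show ?thesis using rest[of y] other[of y] that adj swap by auto
    next
      case 3
      then show ?thesis using rest[of x] other[of x] that adj swap by auto
    qed
  qed
  show "inversions m' - {?p} = inversions m - {?p}"
    unfolding inversions_def keys using same_order by auto
  show "?p \<in> inversions m' \<longleftrightarrow> ?p \<notin> inversions m"
    unfolding inversions_def keys using uv adj swap \<open>u \<noteq> v\<close> by (auto simp: min_def max_def)
qed

lemma permutation_exp_shift_pair:
  fixes z :: "nat set \<Rightarrow> 'k::field"
  assumes card_b: "card (keys b) = d + 1" and v0: "v0 \<in> keys b"
    and perm: "permutation_exp d (b + var_exp v0)"
  obtains u0 where "u0 \<in> keys b" "u0 \<noteq> v0"
    "\<And>v. v \<in> keys b \<Longrightarrow> v \<noteq> u0 \<Longrightarrow> v \<noteq> v0 \<Longrightarrow> \<not> permutation_exp d (b + var_exp v)"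
    "cycle_functional z d (b + var_exp v0) + cycle_functional z d (b + var_exp u0) = 0"
proof -
  let ?G = "keys b"
  define m1 where "m1 = b + var_exp v0"
  have keys_m1: "keys m1 = ?G" unfolding m1_def using v0 by (simp add: keys_add_var_exp insert_absorb)
  have inj1: "inj_on (lookup m1) ?G" using permutation_exp_inj_on[OF perm] keys_m1 unfolding m1_def by simp
  have img1: "lookup m1 ` ?G = {1..d+1}" using perm keys_m1 unfolding m1_def permutation_exp_def by simp
  define k where "k = lookup m1 v0"
  have k_eq: "k = lookup b v0 + 1" unfolding k_def m1_def by (simp add: lookup_add_var_exp)
  have "lookup b v0 \<ge> 1" using v0 by (simp add: in_keys_iff Suc_leI)
  then have "k \<ge> 2" using k_eq by simp
  moreover have "k \<le> d + 1" using img1 v0 unfolding k_def by auto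
  ultimately have "k - 1 \<in> lookup m1 ` ?G" using img1 by auto
  then obtain u0 where u0: "u0 \<in> ?G" "lookup m1 u0 = k - 1" by auto
  have "u0 \<noteq> v0" using u0(2) \<open>k \<ge> 2\<close> unfolding k_def by auto
  have b_u0: "lookup b u0 = k - 1" using u0(2) \<open>u0 \<noteq> v0\<close> unfolding m1_def by (simp add: lookup_add_var_exp)
  define m2 where "m2 = b + var_exp u0"
  have keys_m2: "keys m2 = ?G" unfolding m2_def using u0(1) by (simp add: keys_add_var_exp insert_absorb)
  have swap: "lookup m2 u0 = lookup m1 v0" "lookup m2 v0 = lookup m1 u0"
    unfolding m1_def m2_def using b_u0 k_eq \<open>k \<ge> 2\<close> \<open>u0 \<noteq> v0\<close> u0(2)
    by (simp_all add: lookup_add_var_exp m1_def k_def)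
  have rest: "lookup m2 w = lookup m1 w" if "w \<noteq> u0" "w \<noteq> v0" for w
    unfolding m1_def m2_def using that by (simp add: lookup_add_var_exp)
  have "lookup m2 ` ?G = lookup m1 ` ?G"
  proof -
    have "lookup m2 w \<in> lookup m1 ` ?G" "lookup m1 w \<in> lookup m2 ` ?G" if "w \<in> ?G" for w
      using that swap rest[of w] u0(1) v0 by (metis image_eqI)+
    then show ?thesis by blast
  qed
  then have perm2: "permutation_exp d m2"
    unfolding permutation_exp_def using keys_m2 img1 card_b by simp
  have "(-1 :: 'k) ^ card (inversions m2) = - ((-1) ^ card (inversions m1))"
    by (rule minus_one_power_inversions_swap[OF keys_m2[folded keys_m1] u0(1)[folded keys_m1]
          v0[folded keys_m1] inj1[folded keys_m1] _ swap])
      (use u0(2) \<open>k \<ge> 2\<close> rest in \<open>simp_all add: k_def\<close>)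
  then have "cycle_functional z d m1 + cycle_functional z d m2 = 0"
    unfolding cycle_functional_def using perm perm2 keys_m1 keys_m2 unfolding m1_def by simp
  moreover have "\<not> permutation_exp d (b + var_exp v)" if "v \<in> ?G" "v \<noteq> u0" "v \<noteq> v0" for v
  proof
    assume "permutation_exp d (b + var_exp v)"
    moreover have "keys (b + var_exp v) = ?G" using that by (simp add: keys_add_var_exp insert_absorb)
    moreover have "lookup (b + var_exp v) u0 = lookup (b + var_exp v) v0"
      using that b_u0 k_eq \<open>u0 \<noteq> v0\<close> by (simp add: lookup_add_var_exp)
    ultimately show False
      using permutation_exp_inj_on u0(1) v0 \<open>u0 \<noteq> v0\<close> unfolding inj_on_def by metis
  qed
  ultimately show ?thesis using that u0(1) \<open>u0 \<noteq> v0\<close> unfolding m1_def m2_def by blast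
qed

lemma permutation_exp_add_new_var_iff:
  assumes card_b: "card (keys b) = d" and v: "v \<notin> keys b"
  shows "permutation_exp d (b + var_exp v) \<longleftrightarrow> lookup b ` keys b = {2..d+1}"
proof -
  let ?m = "b + var_exp v"
  have lookup_v: "lookup ?m v = 1" using v by (simp add: lookup_add_var_exp in_keys_iff)
  have lookup_b: "lookup ?m u = lookup b u" if "u \<in> keys b" for u
    using that v by (auto simp: lookup_add_var_exp)
  have img: "lookup ?m ` keys ?m = insert 1 (lookup b ` keys b)"
    using lookup_v lookup_b by (auto simp: keys_add_var_exp)
  have card_m: "card (keys ?m) = d + 1" using card_b v by (simp add: keys_add_var_exp card_insert_if)
  show ?thesis
  proof
    assume perm: "permutation_exp d ?m"
    have "1 \<notin> lookup b ` keys b"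
    proof
      assume "1 \<in> lookup b ` keys b"
      then obtain u where "u \<in> keys b" "lookup ?m u = lookup ?m v" using lookup_b lookup_v by force
      then show False
        using permutation_exp_inj_on[OF perm] v unfolding inj_on_def keys_add_var_exp by blast
    qed
    then have "lookup b ` keys b = insert 1 (lookup b ` keys b) - {1}" by simp
    also have "\<dots> = {1..d+1} - {1}" using perm img unfolding permutation_exp_def by simp
    also have "\<dots> = {2..d+1}" by auto
    finally show "lookup b ` keys b = {2..d+1}" .
  next
    assume "lookup b ` keys b = {2..d+1}"
    then show "permutation_exp d ?m" unfolding permutation_exp_def using img card_m by auto
  qed
qed

lemma card_inversions_add_new_var:
  assumes v: "v \<notin> keys b" and ge2: "\<And>u. u \<in> keys b \<Longrightarrow> lookup b u \<ge> 2"
  shows "card (inversions (b + var_exp v)) = card (inversions b) + card {u\<in>keys b. u < v}"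
proof -
  let ?m = "b + var_exp v"
  have lookup_b: "lookup ?m u = lookup b u" if "u \<in> keys b" for u
    using that v by (auto simp: lookup_add_var_exp)
  have lookup_v: "lookup ?m v = 1" using v by (simp add: lookup_add_var_exp in_keys_iff)
  have "inversions ?m = inversions b \<union> (\<lambda>u. (u, v)) ` {u\<in>keys b. u < v}"
  proof (intro equalityI subsetI)
    fix p assume "p \<in> inversions ?m"
    then obtain u w where uw: "p = (u, w)" "u \<in> insert v (keys b)" "w \<in> insert v (keys b)" "u < w"
      "lookup ?m w < lookup ?m u"
      unfolding inversions_def by (auto simp: keys_add_var_exp)
    show "p \<in> inversions b \<union> (\<lambda>u. (u, v)) ` {u\<in>keys b. u < v}"
    proof (cases "u = v")
      case True
      then show ?thesis using uw lookup_v by (auto simp: lookup_add_var_exp)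
    next
      case False
      then show ?thesis using uw lookup_b unfolding inversions_def by (cases "w = v") auto
    qed
  next
    fix p assume "p \<in> inversions b \<union> (\<lambda>u. (u, v)) ` {u\<in>keys b. u < v}"
    then show "p \<in> inversions ?m"
      using lookup_b lookup_v ge2 v unfolding inversions_def
      by (fastforce simp: keys_add_var_exp Suc_le_eq)
  qed
  moreover have "inversions b \<inter> (\<lambda>u. (u, v)) ` {u\<in>keys b. u < v} = {}"
    using v unfolding inversions_def by auto
  moreover have "card ((\<lambda>u. (u, v)) ` {u\<in>keys b. u < v}) = card {u\<in>keys b. u < v}"
    by (rule card_image) (auto intro: inj_onI)
  ultimately show ?thesis using finite_inversions by (simp add: card_Un_disjoint)
qed

lemma sum_cycle_functional_shift_face:
  fixes z :: "nat set \<Rightarrow> 'k::field"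
  assumes sc: "simplicial_complex n \<Delta>" and ch: "is_chain \<Delta> d z" and card_b: "card (keys b) = d + 1"
  shows "(\<Sum>v\<in>{1..n}. cycle_functional z d (b + var_exp v)) = 0"
proof -
  let ?f = "\<lambda>v. cycle_functional z d (b + var_exp v)"
  have keys_in: "keys (b + var_exp v) = keys b" if "v \<in> keys b" for v
    using that by (simp add: keys_add_var_exp insert_absorb)
  have outside: "?f v = 0" if "v \<notin> keys b" for v
    using that card_b unfolding cycle_functional_def permutation_exp_def by (simp add: keys_add_var_exp)
  show ?thesis
  proof (cases "\<exists>v0\<in>keys b. permutation_exp d (b + var_exp v0) \<and> z (keys b) \<noteq> 0")
    case False
    then have "?f v = 0" for v
      using outside keys_in unfolding cycle_functional_def by (cases "v \<in> keys b") auto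
    then show ?thesis by simp
  next
    case True
    then obtain v0 where v0: "v0 \<in> keys b" "permutation_exp d (b + var_exp v0)" "z (keys b) \<noteq> 0"
      by blast
    obtain u0 where u0: "u0 \<in> keys b" "u0 \<noteq> v0"
      "\<And>v. v \<in> keys b \<Longrightarrow> v \<noteq> u0 \<Longrightarrow> v \<noteq> v0 \<Longrightarrow> \<not> permutation_exp d (b + var_exp v)"
      and cancel: "?f v0 + ?f u0 = 0"
      using permutation_exp_shift_pair[OF card_b v0(1,2)] by metis
    have "keys b \<subseteq> {1..n}"
      using ch v0(3) simplicial_complex_face_subset[OF sc] unfolding is_chain_def by blast
    then have "(\<Sum>v\<in>{1..n}. ?f v) = (\<Sum>v\<in>keys b. ?f v)"
      using outside by (intro sum.mono_neutral_right) auto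
    also have "\<dots> = ?f v0 + ?f u0 + (\<Sum>v\<in>keys b - {v0} - {u0}. ?f v)"
      using v0(1) u0(1,2) by (simp add: sum.remove add.assoc)
    also have "(\<Sum>v\<in>keys b - {v0} - {u0}. ?f v) = 0"
      using u0(3) unfolding cycle_functional_def by (intro sum.neutral) auto
    finally show ?thesis using cancel by simp
  qed
qed

lemma sum_cycle_functional_shift_ridge:
  fixes z :: "nat set \<Rightarrow> 'k::field"
  assumes sc: "simplicial_complex n \<Delta>" and ch: "is_chain \<Delta> d z"
    and cycle: "boundary \<Delta> d z = (\<lambda>_. 0)" and card_b: "card (keys b) = d"
  shows "(\<Sum>v\<in>{1..n}. cycle_functional z d (b + var_exp v)) = 0"
proof -
  let ?G = "keys b"
  let ?f = "\<lambda>v. cycle_functional z d (b + var_exp v)"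
  have "?f v = 0" if "v \<in> ?G" for v
    using that card_b unfolding cycle_functional_def permutation_exp_def
    by (simp add: keys_add_var_exp insert_absorb)
  then have "(\<Sum>v\<in>{1..n}. ?f v) = (\<Sum>v\<in>{1..n} - ?G. ?f v)"
    by (intro sum.mono_neutral_right) auto
  also have "\<dots> = 0"
  proof (cases "lookup b ` ?G = {2..d+1}")
    case False
    then show ?thesis
      using permutation_exp_add_new_var_iff[OF card_b] unfolding cycle_functional_def by simp
  next
    case True
    have f_eq: "?f v = (-1) ^ card (inversions b) * ((-1) ^ card {u\<in>?G. u < v} * z (insert v ?G))"
      if "v \<notin> ?G" for v
      using permutation_exp_add_new_var_iff[OF card_b that] card_inversions_add_new_var[OF that] True
      unfolding cycle_functional_def by (force simp: keys_add_var_exp power_add)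
    have boundary_coeff: "(\<Sum>v\<in>{1..n} - ?G. (-1) ^ card {u\<in>?G. u < v} * z (insert v ?G)) = 0"
    proof (cases "?G \<in> \<Delta>")
      case True
      have "0 = boundary \<Delta> d z ?G" using cycle by simp
      also have "\<dots> = (\<Sum>v\<in>\<Union>\<Delta> - ?G. if insert v ?G \<in> \<Delta>
          then (-1) ^ card {u\<in>?G. u < v} * z (insert v ?G) else 0)"
        unfolding boundary_def using True card_b by simp
      also have "\<dots> = (\<Sum>v\<in>{1..n} - ?G. (-1) ^ card {u\<in>?G. u < v} * z (insert v ?G))"
        unfolding Union_simplicial_complex[OF sc]
        by (rule sum.cong) (use ch in \<open>auto simp: is_chain_def\<close>)
      finally show ?thesis by simp
    next
      case False
      have "z (insert v ?G) = 0" for v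
        using ch False simplicial_complex_subset[OF sc, of "insert v ?G" ?G] unfolding is_chain_def by blast
      then show ?thesis by simp
    qed
    show ?thesis using f_eq boundary_coeff by (simp add: sum_distrib_left[symmetric])
  qed
  finally show ?thesis .
qed

text \<open>For \<open>|supp b| = d + 1\<close> the shifts \<open>b + x\<^sub>v\<close> that are permutation exponents come in
  pairs of opposite sign; for \<open>|supp b| = d\<close> they are the cofaces of \<open>supp b\<close> with the signs of
  the boundary map, so the sum is a coefficient of \<open>\<partial>z = 0\<close>.\<close>
lemma sum_cycle_functional_shift:
  fixes z :: "nat set \<Rightarrow> 'k::field"
  assumes "simplicial_complex n \<Delta>" "is_chain \<Delta> d z" "boundary \<Delta> d z = (\<lambda>_. 0)"
  shows "(\<Sum>v\<in>{1..n}. cycle_functional z d (b + var_exp v)) = 0"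
proof -
  consider "card (keys b) = d + 1" | "card (keys b) = d" | "card (keys b) \<noteq> d" "card (keys b) \<noteq> d + 1"
    by blast
  then show ?thesis
  proof cases
    case 1
    then show ?thesis using sum_cycle_functional_shift_face assms(1,2) by blast
  next
    case 2
    then show ?thesis using sum_cycle_functional_shift_ridge assms by blast
  next
    case 3
    then have "\<not> permutation_exp d (b + var_exp v)" for v
      unfolding permutation_exp_def by (auto simp: keys_add_var_exp card_insert_if)
    then show ?thesis unfolding cycle_functional_def by simp
  qed
qed

section \<open>A functional annihilating the multiples of a linear form\<close>

definition eval_functional :: "(nat \<Rightarrow>\<^sub>0 nat) set \<Rightarrow> ((nat \<Rightarrow>\<^sub>0 nat) \<Rightarrow> 'k::comm_ring_1) \<Rightarrow> 'k mpoly \<Rightarrow> 'k" where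
  "eval_functional W \<phi> p = (\<Sum>w\<in>W. \<phi> w * lookup p w)"

lemma eval_functional_diff: "eval_functional W \<phi> (p - q) = eval_functional W \<phi> p - eval_functional W \<phi> q"
  unfolding eval_functional_def by (simp add: lookup_minus right_diff_distrib sum_subtractf)

lemma eval_functional_sum: "eval_functional W \<phi> (sum f A) = (\<Sum>x\<in>A. eval_functional W \<phi> (f x))"
  unfolding eval_functional_def by (simp add: lookup_sum sum_distrib_left sum.swap[of _ W])

lemma eval_functional_single:
  assumes "finite W" "\<And>w. \<phi> w \<noteq> 0 \<Longrightarrow> w \<in> W"
  shows "eval_functional W \<phi> (single u c) = \<phi> u * c"
proof -
  have "eval_functional W \<phi> (single u c) = (\<Sum>w\<in>W. if w = u then \<phi> u * c else 0)"
    unfolding eval_functional_def by (rule sum.cong) (auto simp: lookup_single when_def)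
  also have "\<dots> = (if u \<in> W then \<phi> u * c else 0)"
    using assms(1) by (simp add: sum.delta)
  finally have eq: "eval_functional W \<phi> (single u c) = (if u \<in> W then \<phi> u * c else 0)" .
  show ?thesis
  proof (cases "u \<in> W")
    case False
    then have "\<phi> u = 0" using assms(2) by blast
    then show ?thesis using eq False by simp
  qed (use eq in simp)
qed

lemma eval_functional_linear_mult:
  fixes \<phi> :: "(nat \<Rightarrow>\<^sub>0 nat) \<Rightarrow> 'k::comm_ring_1"
  assumes fin: "finite W" and supp: "\<And>w. \<phi> w \<noteq> 0 \<Longrightarrow> w \<in> W"
    and shift: "\<And>b. (\<Sum>v\<in>V. a v * \<phi> (b + var_exp v)) = 0"
  shows "eval_functional W \<phi> ((\<Sum>v\<in>V. single (var_exp v) (a v)) * p) = 0"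
proof -
  have "(\<Sum>v\<in>V. single (var_exp v) (a v)) * p
      = (\<Sum>v\<in>V. \<Sum>k\<in>keys p. single (var_exp v + k) (a v * lookup p k))"
    by (subst (2) poly_mapping_sum_single) (simp add: sum_product mult_single)
  then have "eval_functional W \<phi> ((\<Sum>v\<in>V. single (var_exp v) (a v)) * p)
      = (\<Sum>v\<in>V. \<Sum>k\<in>keys p. \<phi> (var_exp v + k) * (a v * lookup p k))"
    by (simp add: eval_functional_sum eval_functional_single[OF fin supp])
  also have "\<dots> = (\<Sum>k\<in>keys p. lookup p k * (\<Sum>v\<in>V. a v * \<phi> (k + var_exp v)))"
    by (subst sum.swap) (simp add: sum_distrib_left algebra_simps add.commute)
  also have "\<dots> = 0" using shift by simp
  finally show ?thesis .
qed

definition partial_degree :: "nat set \<Rightarrow> (nat \<Rightarrow>\<^sub>0 nat) \<Rightarrow> nat" where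
  "partial_degree Z m = (\<Sum>v\<in>Z. lookup m v)"

lemma partial_degree_add_var_exp:
  "finite Z \<Longrightarrow> partial_degree Z (b + var_exp v) = partial_degree Z b + (if v \<in> Z then 1 else 0)"
  unfolding partial_degree_def by (simp add: lookup_add_var_exp sum.distrib)

text \<open>For \<open>l = \<Sum> a\<^sub>v x\<^sub>v\<close>, rescaling the cycle functional by \<open>\<Prod> a\<^sub>v ^ (d + 1 - m\<^sub>v)\<close> over the
  variables with \<open>a\<^sub>v \<noteq> 0\<close> turns the relation for \<open>\<Sum> x\<^sub>v\<close> into one for \<open>l\<close>; the variables with
  \<open>a\<^sub>v = 0\<close> are handled by keeping only a top degree \<open>K\<close> in them.\<close>
definition weighted_functional ::
    "(nat set \<Rightarrow> 'k::field) \<Rightarrow> nat \<Rightarrow> nat \<Rightarrow> (nat \<Rightarrow> 'k) \<Rightarrow> nat \<Rightarrow> (nat \<Rightarrow>\<^sub>0 nat) \<Rightarrow> 'k" where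
  "weighted_functional z d n a K m = cycle_functional z d m *
     (if partial_degree {v\<in>{1..n}. a v = 0} m = K
      then (\<Prod>v\<in>{v\<in>{1..n}. a v \<noteq> 0}. a v ^ (d + 1 - lookup m v)) else 0)"

lemma weighted_functional_add_var_exp:
  fixes z :: "nat set \<Rightarrow> 'k::field"
  assumes v: "v \<in> {1..n}" "a v \<noteq> 0" and K: "partial_degree {u\<in>{1..n}. a u = 0} b = K"
  shows "a v * weighted_functional z d n a K (b + var_exp v)
    = cycle_functional z d (b + var_exp v) * (\<Prod>u\<in>{u\<in>{1..n}. a u \<noteq> 0}. a u ^ (d + 1 - lookup b u))"
proof (cases "cycle_functional z d (b + var_exp v) = 0")
  case True
  then show ?thesis unfolding weighted_functional_def by simp
next
  case False
  define S where "S = {u\<in>{1..n}. a u \<noteq> 0}"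
  have "finite S" "v \<in> S" using v unfolding S_def by auto
  from False have "lookup (b + var_exp v) v \<le> d + 1"
    using permutation_exp_lookup_le unfolding cycle_functional_def by (metis (full_types))
  then have exp_v: "d + 1 - lookup b v = Suc (d + 1 - lookup (b + var_exp v) v)"
    by (simp add: lookup_add_var_exp)
  have rest: "(\<Prod>u\<in>S - {v}. a u ^ (d + 1 - lookup (b + var_exp v) u))
      = (\<Prod>u\<in>S - {v}. a u ^ (d + 1 - lookup b u))"
    by (rule prod.cong) (auto simp: lookup_add_var_exp)
  have "a v * (\<Prod>u\<in>S. a u ^ (d + 1 - lookup (b + var_exp v) u)) = (\<Prod>u\<in>S. a u ^ (d + 1 - lookup b u))"
    unfolding prod.remove[OF \<open>finite S\<close> \<open>v \<in> S\<close>] exp_v rest by (simp add: ac_simps)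
  moreover have "partial_degree {u\<in>{1..n}. a u = 0} (b + var_exp v) = K"
    using partial_degree_add_var_exp[of "{u\<in>{1..n}. a u = 0}"] K v by simp
  ultimately show ?thesis unfolding weighted_functional_def S_def by (simp add: ac_simps)
qed

lemma sum_weighted_functional_shift:
  fixes z :: "nat set \<Rightarrow> 'k::field"
  assumes sc: "simplicial_complex n \<Delta>" and ch: "is_chain \<Delta> d z"
    and cycle: "boundary \<Delta> d z = (\<lambda>_. 0)"
    and top: "\<And>m. cycle_functional z d m \<noteq> 0 \<Longrightarrow> partial_degree {v\<in>{1..n}. a v = 0} m \<le> K"
  shows "(\<Sum>v\<in>{1..n}. a v * weighted_functional z d n a K (b + var_exp v)) = 0"
proof -
  define S where "S = {v\<in>{1..n}. a v \<noteq> 0}"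
  define Z where "Z = {v\<in>{1..n}. a v = 0}"
  let ?\<phi> = "weighted_functional z d n a K"
  have "finite Z" unfolding Z_def by auto
  have "(\<Sum>v\<in>{1..n}. a v * ?\<phi> (b + var_exp v)) = (\<Sum>v\<in>S. a v * ?\<phi> (b + var_exp v))"
    by (rule sum.mono_neutral_right) (auto simp: S_def)
  also have "\<dots> = 0"
  proof (cases "partial_degree Z b = K")
    case False
    have "partial_degree Z (b + var_exp v) = partial_degree Z b" if "v \<in> S" for v
      using that partial_degree_add_var_exp[OF \<open>finite Z\<close>] unfolding S_def Z_def by auto
    then show ?thesis using False unfolding weighted_functional_def Z_def by simp
  next
    case True
    have "a v * ?\<phi> (b + var_exp v)
        = cycle_functional z d (b + var_exp v) * (\<Prod>u\<in>S. a u ^ (d + 1 - lookup b u))" if "v \<in> S" for v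
      using that True unfolding S_def Z_def by (intro weighted_functional_add_var_exp) auto
    then have "(\<Sum>v\<in>S. a v * ?\<phi> (b + var_exp v))
        = (\<Sum>v\<in>S. cycle_functional z d (b + var_exp v)) * (\<Prod>u\<in>S. a u ^ (d + 1 - lookup b u))"
      unfolding sum_distrib_right by (rule sum.cong[OF refl])
    also have "(\<Sum>v\<in>S. cycle_functional z d (b + var_exp v)) = (\<Sum>v\<in>{1..n}. cycle_functional z d (b + var_exp v))"
    proof (rule sum.mono_neutral_left)
      show "\<forall>v\<in>{1..n} - S. cycle_functional z d (b + var_exp v) = 0"
      proof
        fix v assume "v \<in> {1..n} - S"
        then have "partial_degree Z (b + var_exp v) = K + 1"
          using partial_degree_add_var_exp[OF \<open>finite Z\<close>] True unfolding S_def Z_def by simp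
        then show "cycle_functional z d (b + var_exp v) = 0" using top unfolding Z_def by fastforce
      qed
    qed (auto simp: S_def)
    also have "\<dots> = 0" by (rule sum_cycle_functional_shift[OF sc ch cycle])
    finally show ?thesis by simp
  qed
  finally show ?thesis .
qed

lemma cycle_functional_support:
  assumes sc: "simplicial_complex n \<Delta>" and ch: "is_chain \<Delta> d z"
    and nz: "cycle_functional z d m \<noteq> 0"
  shows "standard \<Delta> d m" "2 * mon_deg m = (d + 1) * (d + 2)"
proof -
  have perm: "permutation_exp d m" and "z (keys m) \<noteq> 0"
    using nz unfolding cycle_functional_def by (auto split: if_splits)
  then have "keys m \<in> \<Delta>" using ch unfolding is_chain_def by blast
  then show "standard \<Delta> d m"
    unfolding standard_def using permutation_exp_lookup_le[OF perm] by blast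
  have "mon_deg m = (\<Sum>c\<in>lookup m ` keys m. c)"
    unfolding mon_deg_def using permutation_exp_inj_on[OF perm] by (simp add: sum.reindex)
  also have "\<dots> = (\<Sum>c\<in>{1..d+1}. c)" using perm unfolding permutation_exp_def by simp
  finally show "2 * mon_deg m = (d + 1) * (d + 2)"
    by (simp add: Sum_Icc_nat algebra_simps)
qed

lemma cycle_functional_nonzero:
  assumes sc: "simplicial_complex n \<Delta>" and ch: "is_chain \<Delta> d z" and zF: "z F \<noteq> 0"
  obtains m where "cycle_functional z d m \<noteq> 0"
proof -
  have F: "F \<in> \<Delta>" "card F = d + 1" using ch zF unfolding is_chain_def by auto
  then have "finite F" using simplicial_complex_finite_face[OF sc] by blast
  then obtain h where h: "bij_betw h F {0..<card F}" using ex_bij_betw_finite_nat by blast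
  define m where "m = Abs_poly_mapping (\<lambda>v. if v \<in> F then h v + 1 else 0)"
  have "finite {v. (if v \<in> F then h v + 1 else 0) \<noteq> (0::nat)}"
    using \<open>finite F\<close> by (rule finite_subset[rotated]) auto
  then have lookup_m: "lookup m v = (if v \<in> F then h v + 1 else 0)" for v
    unfolding m_def by simp
  have keys_m: "keys m = F" by (auto simp: in_keys_iff lookup_m split: if_splits)
  have "lookup m ` F = (\<lambda>x. x + 1) ` h ` F" by (auto simp: lookup_m image_image)
  also have "\<dots> = {1..d+1}" using h F(2) unfolding bij_betw_def by (auto simp: image_iff)
  finally have "permutation_exp d m" unfolding permutation_exp_def using keys_m F(2) by simp
  then have "cycle_functional z d m \<noteq> 0" unfolding cycle_functional_def using keys_m zF by simp
  then show ?thesis by (rule that)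
qed

lemma reduced_homology_nonzero_imp_cycle_functional:
  assumes sc: "simplicial_complex n \<Delta>" and "reduced_homology_nonzero TYPE('k::field) \<Delta> d"
  obtains z :: "nat set \<Rightarrow> 'k::field" and m
  where "is_chain \<Delta> d z" "boundary \<Delta> d z = (\<lambda>_. 0)" "cycle_functional z d m \<noteq> 0"
proof -
  obtain z :: "nat set \<Rightarrow> 'k" where z: "is_chain \<Delta> d z" "boundary \<Delta> d z = (\<lambda>_. 0)"
    and not_boundary: "\<not> (\<exists>b :: nat set \<Rightarrow> 'k. is_chain \<Delta> (d + 1) b \<and> boundary \<Delta> (d + 1) b = z)"
    using assms(2) unfolding reduced_homology_nonzero_def by blast
  have "z \<noteq> (\<lambda>_. 0)"
  proof
    assume "z = (\<lambda>_. 0)"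
    then have "is_chain \<Delta> (d + 1) (\<lambda>_. 0 :: 'k) \<and> boundary \<Delta> (d + 1) (\<lambda>_. 0) = z"
      unfolding is_chain_def boundary_def by (auto simp: fun_eq_iff intro!: sum.neutral)
    then show False using not_boundary by blast
  qed
  then obtain F where "z F \<noteq> 0" by blast
  then obtain m where "cycle_functional z d m \<noteq> 0" by (rule cycle_functional_nonzero[OF sc z(1)])
  with z show ?thesis by (rule that)
qed

lemma annihilating_functional:
  fixes z :: "nat set \<Rightarrow> 'k::field" and l :: "'k mpoly"
  assumes sc: "simplicial_complex n \<Delta>" and ch: "is_chain \<Delta> d z"
    and cycle: "boundary \<Delta> d z = (\<lambda>_. 0)" and nz: "cycle_functional z d m0 \<noteq> 0"
    and l: "l \<in> R_deg n 1" and T: "2 * T = (d + 1) * (d + 2)"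
  obtains m \<phi> where "m \<in> standard_monomials \<Delta> d T" "\<phi> m \<noteq> 0"
    "\<And>w. \<phi> w \<noteq> 0 \<Longrightarrow> w \<in> standard_monomials \<Delta> d T"
    "\<And>p. eval_functional (standard_monomials \<Delta> d T) \<phi> (l * p) = 0"
proof -
  let ?W = "standard_monomials \<Delta> d T"
  define a where "a v = lookup l (var_exp v)" for v
  define Z where "Z = {v\<in>{1..n}. a v = 0}"
  let ?supp = "{m. cycle_functional z d m \<noteq> 0}"
  have supp_W: "?supp \<subseteq> ?W"
  proof
    fix m assume "m \<in> ?supp"
    then have "cycle_functional z d m \<noteq> 0" by simp
    from cycle_functional_support[OF sc ch this] T have "standard \<Delta> d m" "mon_deg m = T"
      by linarith+
    then show "m \<in> ?W" unfolding standard_monomials_def by simp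
  qed
  define K where "K = Max (partial_degree Z ` ?supp)"
  have fin: "finite (partial_degree Z ` ?supp)"
    using finite_subset[OF supp_W finite_standard_monomials[OF sc]] by (rule finite_imageI)
  have top: "partial_degree Z m' \<le> K" if "cycle_functional z d m' \<noteq> 0" for m'
    unfolding K_def using fin that by (simp add: Max_ge)
  have "partial_degree Z ` ?supp \<noteq> {}" using nz by blast
  then obtain m where m: "cycle_functional z d m \<noteq> 0" "partial_degree Z m = K"
    using Max_in[OF fin] unfolding K_def by auto
  define \<phi> where "\<phi> = weighted_functional z d n a K"
  have "\<phi> m \<noteq> 0" using m unfolding \<phi>_def weighted_functional_def Z_def by simp
  moreover have supp: "w \<in> ?W" if "\<phi> w \<noteq> 0" for w
    using that supp_W unfolding \<phi>_def weighted_functional_def by auto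
  moreover have "eval_functional ?W \<phi> (l * p) = 0" for p
  proof -
    have "(\<Sum>v\<in>{1..n}. a v * \<phi> (b + var_exp v)) = 0" for b
      unfolding \<phi>_def by (rule sum_weighted_functional_shift[OF sc ch cycle]) (use top in \<open>simp add: Z_def\<close>)
    from eval_functional_linear_mult[OF finite_standard_monomials[OF sc] supp this]
    show ?thesis unfolding a_def linear_form_eq_sum[OF l, symmetric] .
  qed
  ultimately show ?thesis using that supp_W m(1) by blast
qed

lemma square_mat_kernel_if_left_kernel:
  fixes M :: "'k::field mat"
  assumes M: "M \<in> carrier_mat N N" and y: "y \<in> carrier_vec N" "y \<noteq> 0\<^sub>v N"
    and left: "transpose_mat M *\<^sub>v y = 0\<^sub>v N"
  obtains x where "x \<in> carrier_vec N" "x \<noteq> 0\<^sub>v N" "M *\<^sub>v x = 0\<^sub>v N"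
proof -
  have "transpose_mat M \<in> carrier_mat N N" using M by simp
  then have "det (transpose_mat M) = 0" using det_0_iff_vec_prod_zero_field y left by blast
  then have "det M = 0" using det_transpose[OF M] by simp
  then show ?thesis using det_0_iff_vec_prod_zero_field[OF M] that by blast
qed

text \<open>Padding with zero rows makes the matrix square.\<close>
lemma right_kernel_if_left_kernel:
  fixes M :: "'b \<Rightarrow> 'a \<Rightarrow> 'k::field"
  assumes fin: "finite A" "finite B" and card: "card B \<le> card A"
    and y: "b0 \<in> B" "y b0 \<noteq> 0" and left: "\<And>a. a \<in> A \<Longrightarrow> (\<Sum>b\<in>B. y b * M b a) = 0"
  obtains x a0 where "a0 \<in> A" "x a0 \<noteq> 0" "\<And>b. b \<in> B \<Longrightarrow> (\<Sum>a\<in>A. M b a * x a) = 0"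
proof -
  define N where "N = card A"
  obtain \<alpha> where \<alpha>: "bij_betw \<alpha> {..<N} A"
    using ex_bij_betw_nat_finite[OF fin(1)] unfolding N_def atLeast0LessThan by blast
  obtain \<beta> where \<beta>: "bij_betw \<beta> {..<card B} B"
    using ex_bij_betw_nat_finite[OF fin(2)] unfolding atLeast0LessThan by blast
  define Mt :: "'k mat" where "Mt = mat N N (\<lambda>(i, j). if i < card B then M (\<beta> i) (\<alpha> j) else 0)"
  define yv :: "'k vec" where "yv = vec N (\<lambda>i. if i < card B then y (\<beta> i) else 0)"
  have Mt: "Mt \<in> carrier_mat N N" unfolding Mt_def by simp
  have yv: "yv \<in> carrier_vec N" unfolding yv_def by simp
  obtain i0 where i0: "i0 < card B" "\<beta> i0 = b0" using \<beta> y(1) unfolding bij_betw_def by force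
  then have "yv $ i0 \<noteq> 0" using y(2) card unfolding yv_def N_def by simp
  then have "yv \<noteq> 0\<^sub>v N" using i0(1) card unfolding N_def by auto
  moreover have "transpose_mat Mt *\<^sub>v yv = 0\<^sub>v N"
  proof (rule eq_vecI)
    fix j assume "j < dim_vec (0\<^sub>v N :: 'k vec)"
    then have j: "j < N" by simp
    have "(transpose_mat Mt *\<^sub>v yv) $ j = (\<Sum>i<N. Mt $$ (i, j) * yv $ i)"
      using j Mt yv unfolding mult_mat_vec_def scalar_prod_def
      by (simp add: lessThan_atLeast0 mult.commute)
    also have "\<dots> = (\<Sum>i<card B. y (\<beta> i) * M (\<beta> i) (\<alpha> j))"
      using j card unfolding N_def Mt_def yv_def
      by (intro sum.mono_neutral_cong_right) auto
    also have "\<dots> = (\<Sum>b\<in>B. y b * M b (\<alpha> j))"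
      using sum.reindex_bij_betw[OF \<beta>] by simp
    also have "\<dots> = 0" using left \<alpha> j unfolding bij_betw_def by auto
    finally show "(transpose_mat Mt *\<^sub>v yv) $ j = 0\<^sub>v N $ j" using j by simp
  qed (use Mt in simp)
  ultimately obtain v where v: "v \<in> carrier_vec N" "v \<noteq> 0\<^sub>v N" "Mt *\<^sub>v v = 0\<^sub>v N"
    using square_mat_kernel_if_left_kernel[OF Mt yv] by blast
  define x where "x a = v $ the_inv_into {..<N} \<alpha> a" for a
  have x_\<alpha>: "x (\<alpha> j) = v $ j" if "j < N" for j
    unfolding x_def using that \<alpha> the_inv_into_f_f[of \<alpha> "{..<N}" j] unfolding bij_betw_def by auto
  obtain j0 where "j0 < N" "v $ j0 \<noteq> 0" using v(1,2) by (metis carrier_vecD eq_vecI index_zero_vec)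
  then have "\<alpha> j0 \<in> A" "x (\<alpha> j0) \<noteq> 0" using \<alpha> x_\<alpha> unfolding bij_betw_def by auto
  moreover have "(\<Sum>a\<in>A. M b a * x a) = 0" if b: "b \<in> B" for b
  proof -
    obtain i where i: "i < card B" "\<beta> i = b" using \<beta> b unfolding bij_betw_def by force
    then have "i < N" using card unfolding N_def by simp
    have "(\<Sum>a\<in>A. M b a * x a) = (\<Sum>j<N. M b (\<alpha> j) * x (\<alpha> j))"
      using sum.reindex_bij_betw[OF \<alpha>, of "\<lambda>a. M b a * x a"] by simp
    also have "\<dots> = (Mt *\<^sub>v v) $ i"
      using \<open>i < N\<close> Mt v(1) i x_\<alpha> unfolding mult_mat_vec_def scalar_prod_def Mt_def
      by (auto simp: lessThan_atLeast0 intro: sum.cong)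
    also have "\<dots> = 0" using v(3) \<open>i < N\<close> by simp
    finally show ?thesis .
  qed
  ultimately show ?thesis using that by blast
qed

lemma lookup_mult_single_scale:
  fixes p :: "'k::comm_ring_1 mpoly"
  shows "lookup (p * single a c) w = c * lookup (p * single a 1) w"
proof -
  have "single 0 c * single a 1 = (single a c :: 'k mpoly)" by (simp add: mult_single)
  then have "p * single a c = Poly_Mapping.map ((*) c) (p * single a 1)"
    unfolding mult_map_scale_conv_mult by (metis mult.left_commute)
  then show ?thesis by (simp add: map.rep_eq when_def)
qed

lemma lookup_mult_sum_single:
  fixes p :: "'k::comm_ring_1 mpoly"
  shows "lookup (p * (\<Sum>a\<in>A. single a (x a))) w = (\<Sum>a\<in>A. lookup (p * single a 1) w * x a)"
proof -
  have "lookup (p * (\<Sum>a\<in>A. single a (x a))) w = (\<Sum>a\<in>A. lookup (p * single a (x a)) w)"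
    by (simp add: sum_distrib_left lookup_sum)
  also have "\<dots> = (\<Sum>a\<in>A. lookup (p * single a 1) w * x a)"
    by (rule sum.cong[OF refl]) (subst lookup_mult_single_scale, rule mult.commute)
  finally show ?thesis .
qed

lemma eval_functional_J:
  assumes "simplicial_complex n \<Delta>" "\<And>w. w \<in> W \<Longrightarrow> standard \<Delta> d w"
    and "(p :: 'k::comm_ring_1 mpoly) \<in> ideal_gen n (J_gens n \<Delta> d)"
  shows "eval_functional W \<phi> p = 0"
proof -
  have "lookup p w = 0" if "w \<in> W" for w
    using keys_J_not_standard[OF assms(1,3), of w] assms(2)[OF that] by (auto simp: in_keys_iff)
  then show ?thesis unfolding eval_functional_def by simp
qed

lemma single_standard_in_R_deg:
  assumes "simplicial_complex n \<Delta>" "m \<in> standard_monomials \<Delta> d i"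
  shows "single m c \<in> R_deg n i"
proof -
  have "keys m \<subseteq> {1..n}"
    using standard_keys_subset[OF assms(1)] assms(2) unfolding standard_monomials_def by blast
  then show ?thesis using assms(2) unfolding R_deg_def standard_monomials_def in_R_def by auto
qed

lemma annihilating_functional_not_surjective:
  fixes \<phi> :: "(nat \<Rightarrow>\<^sub>0 nat) \<Rightarrow> 'k::field" and l :: "'k mpoly"
  assumes sc: "simplicial_complex n \<Delta>" and "T \<ge> 1"
    and m: "m \<in> standard_monomials \<Delta> d T" "\<phi> m \<noteq> 0"
    and supp: "\<And>w. \<phi> w \<noteq> 0 \<Longrightarrow> w \<in> standard_monomials \<Delta> d T"
    and ann: "\<And>p. eval_functional (standard_monomials \<Delta> d T) \<phi> (l * p) = 0"
  shows "\<not> mult_surjective n (ideal_gen n (J_gens n \<Delta> d)) l (T - 1)"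
proof
  let ?W = "standard_monomials \<Delta> d T"
  assume "mult_surjective n (ideal_gen n (J_gens n \<Delta> d)) l (T - 1)"
  moreover have "single m 1 \<in> R_deg n (T - 1 + 1)"
    using single_standard_in_R_deg[OF sc m(1)] \<open>T \<ge> 1\<close> by simp
  ultimately obtain f where f: "single m 1 - l * f \<in> ideal_gen n (J_gens n \<Delta> d)"
    unfolding mult_surjective_def by blast
  have "eval_functional ?W \<phi> (single m 1 - l * f) = 0"
    by (rule eval_functional_J[OF sc _ f]) (simp add: standard_monomials_def)
  moreover have "eval_functional ?W \<phi> (single m 1) = \<phi> m"
    using eval_functional_single[where \<phi> = \<phi>, OF finite_standard_monomials[OF sc] supp] by simp
  ultimately show False using ann m(2) by (simp add: eval_functional_diff)
qed

lemma annihilating_functional_not_injective: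
  fixes \<phi> :: "(nat \<Rightarrow>\<^sub>0 nat) \<Rightarrow> 'k::field" and l :: "'k mpoly"
  assumes sc: "simplicial_complex n \<Delta>" and "T \<ge> 1" and l: "l \<in> R_deg n 1"
    and m: "m \<in> standard_monomials \<Delta> d T" "\<phi> m \<noteq> 0"
    and ann: "\<And>p. eval_functional (standard_monomials \<Delta> d T) \<phi> (l * p) = 0"
    and card: "card (standard_monomials \<Delta> d T) \<le> card (standard_monomials \<Delta> d (T - 1))"
  shows "\<not> mult_injective n (ideal_gen n (J_gens n \<Delta> d)) l (T - 1)"
proof -
  let ?W = "standard_monomials \<Delta> d T" and ?A = "standard_monomials \<Delta> d (T - 1)"
  let ?J = "ideal_gen n (J_gens n \<Delta> d)"
  define M where "M w a = lookup (l * single a 1) w" for w a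
  have left: "(\<Sum>w\<in>?W. \<phi> w * M w a) = 0" for a
    using ann[of "single a 1"] unfolding M_def eval_functional_def .
  obtain x a0 where a0: "a0 \<in> ?A" "x a0 \<noteq> 0"
    and kernel: "\<And>w. w \<in> ?W \<Longrightarrow> (\<Sum>a\<in>?A. M w a * x a) = 0"
    by (rule right_kernel_if_left_kernel[where M = M, OF finite_standard_monomials[OF sc]
        finite_standard_monomials[OF sc] card m left]) blast
  define f where "f = (\<Sum>a\<in>?A. single a (x a))"
  have lookup_f: "lookup f a = (if a \<in> ?A then x a else 0)" for a
    unfolding f_def using finite_standard_monomials[OF sc] by (simp add: lookup_sum lookup_single when_def)
  then have keys_f: "keys f \<subseteq> ?A" by (auto simp: in_keys_iff split: if_splits)
  have "f \<in> R_deg n (T - 1)"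
    using keys_f standard_keys_subset[OF sc] unfolding R_deg_def in_R_def standard_monomials_def by auto
  moreover have "f \<notin> ?J"
  proof
    assume "f \<in> ?J"
    moreover have "a0 \<in> keys f" using a0 by (simp add: in_keys_iff lookup_f)
    ultimately show False using keys_J_not_standard[OF sc] a0(1) unfolding standard_monomials_def by blast
  qed
  moreover have "l * f \<in> ?J"
  proof (rule not_standard_in_J[OF sc])
    show "in_R n (l * f)"
      using l \<open>f \<in> R_deg n (T - 1)\<close> unfolding R_deg_def by (blast intro: in_R_mult)
    fix w assume w: "w \<in> keys (l * f)"
    then obtain k a where ka: "w = k + a" "k \<in> keys l" "a \<in> keys f" using keys_mult[of l f] by blast
    then have "mon_deg w = T"
      using l keys_f \<open>T \<ge> 1\<close> mon_deg_add[of k a] unfolding R_deg_def standard_monomials_def by auto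
    moreover have "lookup (l * f) w = 0" if "w \<in> ?W"
      using kernel[OF that] unfolding f_def M_def lookup_mult_sum_single .
    ultimately show "\<not> standard \<Delta> d w" using w unfolding standard_monomials_def by (auto simp: in_keys_iff)
  qed
  ultimately show ?thesis unfolding mult_injective_def by blast
qed

lemma quot_nonzero_deg_le:
  assumes sc: "simplicial_complex n \<Delta>"
    and "quot_nonzero_deg n (ideal_gen n (J_gens n \<Delta> d) :: 'k::comm_ring_1 mpoly set) i"
  shows "i \<le> n * (d + 1)"
proof -
  obtain f :: "'k mpoly" where f: "f \<in> R_deg n i" "f \<notin> ideal_gen n (J_gens n \<Delta> d)"
    using assms(2) unfolding quot_nonzero_deg_def by blast
  then obtain w where w: "w \<in> keys f" "standard \<Delta> d w"
    using not_standard_in_J[OF sc, of f d] unfolding R_deg_def by blast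
  have "mon_deg w = i" using w(1) f(1) unfolding R_deg_def by blast
  then have "i = (\<Sum>v\<in>keys w. lookup w v)" unfolding mon_deg_def by simp
  also have "\<dots> \<le> card (keys w) * (d + 1)"
    using w(2) sum_bounded_above[of "keys w" "lookup w" "d + 1"] unfolding standard_def by simp
  also have "\<dots> \<le> n * (d + 1)"
    by (rule mult_right_mono) (use card_mono[OF _ standard_keys_subset[OF sc w(2)]] in simp_all)
  finally show ?thesis .
qed

lemma top_degree_ge:
  assumes sc: "simplicial_complex n \<Delta>" and m: "m \<in> standard_monomials \<Delta> d T"
  shows "T \<le> top_degree n (ideal_gen n (J_gens n \<Delta> d) :: 'k::comm_ring_1 mpoly set)"
proof -
  have "single m (1::'k) \<notin> ideal_gen n (J_gens n \<Delta> d)"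
    using keys_J_not_standard[OF sc, of "single m 1" d m] m unfolding standard_monomials_def by auto
  then have "quot_nonzero_deg n (ideal_gen n (J_gens n \<Delta> d) :: 'k mpoly set) T"
    unfolding quot_nonzero_deg_def using single_standard_in_R_deg[OF sc m] by blast
  then show ?thesis
    unfolding top_degree_def using quot_nonzero_deg_le[OF sc] by (rule Greatest_le_nat)
qed

theorem theorem6p7:
  fixes \<Delta> :: "nat set set" and n d :: nat and J :: "'k::field mpoly set"
  assumes "simplicial_complex n \<Delta>"
    and "d = sc_dim \<Delta>" and "d > 0"
    and "fvec \<Delta> (d - 1) \<ge> fvec \<Delta> d"
    and "reduced_homology_nonzero TYPE('k) \<Delta> d"
    and "J = ideal_gen n (SR_gens n \<Delta> \<union> {Var i ^ (d + 2) | i. i \<in> {1..n}})"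
  shows "\<not> has_WLP n J"
proof
  note sc = assms(1)
  have J: "J = ideal_gen n (J_gens n \<Delta> d)" using assms(6) unfolding J_gens_def .
  assume "has_WLP n J"
  then obtain l where l: "l \<in> R_deg n 1"
    and full_rank: "\<forall>i < top_degree n J. mult_injective n J l i \<or> mult_surjective n J l i"
    unfolding has_WLP_def by blast
  obtain z :: "nat set \<Rightarrow> 'k" and m0 where z: "is_chain \<Delta> d z" "boundary \<Delta> d z = (\<lambda>_. 0)"
    "cycle_functional z d m0 \<noteq> 0"
    using reduced_homology_nonzero_imp_cycle_functional[OF sc assms(5)] .
  define T where "T = (d + 1) * (d + 2) div 2"
  have T: "2 * T = (d + 1) * (d + 2)" unfolding T_def by simp
  then have "T \<ge> 1" by (cases T) auto
  obtain m \<phi> where m: "m \<in> standard_monomials \<Delta> d T" "\<phi> m \<noteq> 0"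
    and supp: "\<And>w. \<phi> w \<noteq> 0 \<Longrightarrow> w \<in> standard_monomials \<Delta> d T"
    and ann: "\<And>p. eval_functional (standard_monomials \<Delta> d T) \<phi> (l * p) = 0"
    by (rule annihilating_functional[OF sc z l T]) blast
  have "T - 1 < top_degree n J"
    using top_degree_ge[OF sc m(1), where 'k='k] \<open>T \<ge> 1\<close> unfolding J by simp
  then have "mult_injective n J l (T - 1) \<or> mult_surjective n J l (T - 1)"
    using full_rank by simp
  moreover have "\<not> mult_surjective n J l (T - 1)"
    unfolding J using annihilating_functional_not_surjective[OF sc \<open>T \<ge> 1\<close> m supp ann] .
  moreover have "\<not> mult_injective n J l (T - 1)"
    unfolding J using annihilating_functional_not_injective[OF sc \<open>T \<ge> 1\<close> l m ann
        card_standard_monomials_middle_le[OF sc assms(2-4) T]] .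
  ultimately show False by simp
qed

end
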